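(* Let $\lambda_1,\lambda_2>2$, $0<\alpha\le n(\lambda_1-2)/2$, $0<\beta\le m(\lambda_2-2)/2$, and let $K_{t_1,t_2}$ satisfy Assumption 1. Let $I_1,I_2\in\mathcal D_n$ and $J_1,J_2\in\mathcal D_m$ with $\ell(I_1)<\ell(I_2)$ and $\ell(J_1)<\ell(J_2)$, let $h_{I_1},h_{J_1}$ be cancellative Haar functions, and let $(x_1,t_1)\in W_{I_2}$, $(x_2,t_2)\in W_{J_2}$. Then $$\Big(\iint_{\mathbb{R}^{n+m}}|\theta_{t_1,t_2}(h_{I_1}\otimes h_{J_1})(x-y)|^2\Big(\tfrac{t_1}{t_1+|y_1|}\Big)^{n\lambda_1}\Big(\tfrac{t_2}{t_2+|y_2|}\Big)^{m\lambda_2}\frac{dy_1dy_2}{t_1^nt_2^m}\Big)^{1/2}\lesssim \frac{\ell(I_1)^\alpha|I_1|^{1/2}}{(\ell(I_2)+d(I_1,I_2))^{n+\alpha}}\cdot\frac{\ell(J_1)^\beta|J_1|^{1/2}}{(\ell(J_2)+d(J_1,J_2))^{m+\beta}},$$ and consequently this quantity is $\lesssim A_{I_1I_2}|I_2|^{-1/2}\,A_{J_1J_2}|J_2|^{-1/2}$.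
   Context: $\ell^\infty$ norms on $\mathbb{R}^n,\mathbb{R}^m$; $x=(x_1,x_2)$, $y=(y_1,y_2)$. $\theta_{t_1,t_2}f(w)=\iint K_{t_1,t_2}(w,z)f(z)\,dz$ and $\theta_{t_1,t_2}f(x-y)$ means this function evaluated at $(x_1-y_1,x_2-y_2)$. Assumption 1: (1) $|K_{t_1,t_2}(x,y)|\lesssim \frac{t_1^\alpha}{(t_1+|x_1-y_1|)^{n+\alpha}}\frac{t_2^\beta}{(t_2+|x_2-y_2|)^{m+\beta}}$; (2) $|K_{t_1,t_2}(x,y)-K_{t_1,t_2}(x,(y_1,y_2'))-K_{t_1,t_2}(x,(y_1',y_2))+K_{t_1,t_2}(x,y')|\lesssim \frac{|y_1-y_1'|^\alpha}{(t_1+|x_1-y_1|)^{n+\alpha}}\frac{|y_2-y_2'|^\beta}{(t_2+|x_2-y_2|)^{m+\beta}}$ whenever $|y_1-y_1'|<t_1/2$, $|y_2-y_2'|<t_2/2$; (3) $|K_{t_1,t_2}(x,y)-K_{t_1,t_2}(x,(y_1,y_2'))|\lesssim \frac{t_1^\alpha}{(t_1+|x_1-y_1|)^{n+\alpha}}\frac{|y_2-y_2'|^\beta}{(t_2+|x_2-y_2|)^{m+\beta}}$ whenever $|y_2-y_2'|<t_2/2$, and the symmetric estimate in the first variable whenever $|y_1-y_1'|<t_1/2$. $\mathcal D_n,\mathcal D_m$ are dyadic grids; $W_I=I\times(\ell(I)/2,\ell(I))$; $d(\cdot,\cdot)$ is the distance between cubes. A cancellative Haar function $h_I$ on a dyadic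 cube $I=I_1\times\cdots\times I_n$ is $h_{I_1}^{\eta_1}\otimes\cdots\otimes h_{I_n}^{\eta_n}$ with $\eta\in\{0,1\}^n\setminus\{0\}$, $h^0_{I_i}=|I_i|^{-1/2}\mathbf 1_{I_i}$, $h^1_{I_i}=|I_i|^{-1/2}(\mathbf 1_{I_{i,l}}-\mathbf 1_{I_{i,r}})$ (left/right halves). $A_{I_1I_2}=\frac{\ell(I_1)^{\alpha/2}\ell(I_2)^{\alpha/2}}{D(I_1,I_2)^{n+\alpha}}|I_1|^{1/2}|I_2|^{1/2}$ with $D(I_1,I_2)=\ell(I_1)+\ell(I_2)+d(I_1,I_2)$, and analogously $A_{J_1J_2}$ with $m,\beta$. *)

theory Defs
  imports "HOL-Analysis.Analysis"
begin

definition linf :: "real^('n::finite) \<Rightarrow> real" where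
  "linf x = Max (range (\<lambda>i. \<bar>x $ i\<bar>))"

definition dside :: "int \<Rightarrow> real" where
  "dside k = 2 powr (- real_of_int k)"

definition dcube :: "int \<Rightarrow> ('n::finite \<Rightarrow> int) \<Rightarrow> (real^'n) set" where
  "dcube k j = {x. \<forall>i. real_of_int (j i) * dside k \<le> x $ i \<and> x $ i < (real_of_int (j i) + 1) * dside k}"

definition cdist :: "(real^('n::finite)) set \<Rightarrow> (real^'n) set \<Rightarrow> real" where
  "cdist A B = Inf {linf (x - y) | x y. x \<in> A \<and> y \<in> B}"

definition haar1 :: "real \<Rightarrow> real \<Rightarrow> bool \<Rightarrow> real \<Rightarrow> real" where
  "haar1 a l e s = (if e
     then (indicator {a..<a + l/2} s - indicator {a + l/2..<a + l} s) / sqrt l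
     else indicator {a..<a + l} s / sqrt l)"

text \<open>Haar function h_I^eta on the dyadic cube dcube k j (cancellative iff eta is not identically False).\<close>
definition haar :: "int \<Rightarrow> ('n::finite \<Rightarrow> int) \<Rightarrow> ('n \<Rightarrow> bool) \<Rightarrow> real^'n \<Rightarrow> real" where
  "haar k j eta x = (\<Prod>i\<in>UNIV. haar1 (real_of_int (j i) * dside k) (dside k) (eta i) (x $ i))"

type_synonym ('n, 'm) kernel =
  "real \<Rightarrow> real \<Rightarrow> ((real^'n) \<times> (real^'m)) \<Rightarrow> ((real^'n) \<times> (real^'m)) \<Rightarrow> real"

definition assumption1 :: "real \<Rightarrow> real \<Rightarrow> real \<Rightarrow> ('n::finite, 'm::finite) kernel \<Rightarrow> bool" where
  "assumption1 C \<alpha> \<beta> K \<longleftrightarrow>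
    (\<forall>t1 t2 x1 x2 y1 y2 y1' y2'. t1 > 0 \<longrightarrow> t2 > 0 \<longrightarrow>
      (\<bar>K t1 t2 (x1, x2) (y1, y2)\<bar>
         \<le> C * (t1 powr \<alpha> / (t1 + linf (x1 - y1)) powr (real CARD('n) + \<alpha>))
              * (t2 powr \<beta> / (t2 + linf (x2 - y2)) powr (real CARD('m) + \<beta>))) \<and>
      (linf (y1 - y1') < t1 / 2 \<longrightarrow> linf (y2 - y2') < t2 / 2 \<longrightarrow>
        \<bar>K t1 t2 (x1, x2) (y1, y2) - K t1 t2 (x1, x2) (y1, y2')
          - K t1 t2 (x1, x2) (y1', y2) + K t1 t2 (x1, x2) (y1', y2')\<bar>
         \<le> C * (linf (y1 - y1') powr \<alpha> / (t1 + linf (x1 - y1)) powr (real CARD('n) + \<alpha>))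
              * (linf (y2 - y2') powr \<beta> / (t2 + linf (x2 - y2)) powr (real CARD('m) + \<beta>))) \<and>
      (linf (y2 - y2') < t2 / 2 \<longrightarrow>
        \<bar>K t1 t2 (x1, x2) (y1, y2) - K t1 t2 (x1, x2) (y1, y2')\<bar>
         \<le> C * (t1 powr \<alpha> / (t1 + linf (x1 - y1)) powr (real CARD('n) + \<alpha>))
              * (linf (y2 - y2') powr \<beta> / (t2 + linf (x2 - y2)) powr (real CARD('m) + \<beta>))) \<and>
      (linf (y1 - y1') < t1 / 2 \<longrightarrow>
        \<bar>K t1 t2 (x1, x2) (y1, y2) - K t1 t2 (x1, x2) (y1', y2)\<bar>
         \<le> C * (linf (y1 - y1') powr \<alpha> / (t1 + linf (x1 - y1)) powr (real CARD('n) + \<alpha>))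
              * (t2 powr \<beta> / (t2 + linf (x2 - y2)) powr (real CARD('m) + \<beta>))))"

definition theta :: "('n::finite, 'm::finite) kernel \<Rightarrow> real \<Rightarrow> real \<Rightarrow>
    ((real^'n) \<times> (real^'m) \<Rightarrow> real) \<Rightarrow> (real^'n) \<times> (real^'m) \<Rightarrow> real" where
  "theta K t1 t2 f w = (LINT z|lborel. K t1 t2 w z * f z)"

text \<open>The square of the left-hand side quantity (as an extended nonnegative real).\<close>
definition lhs_sq :: "('n::finite, 'm::finite) kernel \<Rightarrow> real \<Rightarrow> real \<Rightarrow>
    ((real^'n) \<times> (real^'m) \<Rightarrow> real) \<Rightarrow> real^'n \<Rightarrow> real^'m \<Rightarrow> real \<Rightarrow> real \<Rightarrow> ennreal" where
  "lhs_sq K lam1 lam2 f x1 x2 t1 t2 =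
    (\<integral>\<^sup>+ y. ennreal (\<bar>theta K t1 t2 f (x1 - fst y, x2 - snd y)\<bar>\<^sup>2
        * (t1 / (t1 + linf (fst y))) powr (real CARD('n) * lam1)
        * (t2 / (t2 + linf (snd y))) powr (real CARD('m) * lam2)
        / (t1 ^ CARD('n) * t2 ^ CARD('m))) \<partial>lborel)"

end

theory Submission
  imports Defs
begin

(* Both cancellations of h_I1 (x) h_J1 are used at once. Each factor has mean zero, so
   subtracting the kernel at the centres c1, c2 of I1, J1 does not change theta, and the
   double difference estimate of Assumption 1 gives
     |theta (h_I1 (x) h_J1) (w)| <~ prod l(I1)^alpha |I1|^(1/2) / (t1 + |w1 - c1|)^(n + alpha).
   After squaring, the y-integral factorises; each factor is a convolution of
   (t + |.|)^(-2(n + alpha)) with the weight (t / (t + |.|))^(n lambda), which is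
   <~ (t + |x1 - c1|)^(-2(n + alpha)) because n lambda >= 2(n + alpha) > n: this is where
   alpha <= n(lambda - 2)/2 enters. Finally t1 ~ l(I2) and |x1 - c1| >= d(I1, I2) as x1 lies
   in I2, and l(I1) <= l(I2) turns the bound into A_I1I2 |I2|^(-1/2). *)

section \<open>The l-infinity norm and decay integrals\<close>

lemma linf_eq_infnorm: "linf (x::real^'n::finite) = infnorm x"
proof -
  have "{\<bar>x$i\<bar> |i. i\<in>UNIV} = range (\<lambda>i. \<bar>x$i\<bar>)" by auto
  then show ?thesis unfolding linf_def infnorm_cart by (simp add: cSup_eq_Max)
qed

lemma linf_nonneg: "0 \<le> linf x"
  by (simp add: linf_eq_infnorm infnorm_pos_le)

lemma linf_triangle: "linf (x + y) \<le> linf x + linf y"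
  by (simp add: linf_eq_infnorm infnorm_triangle)

lemma linf_minus_commute: "linf (x - y) = linf (y - x)"
  by (simp add: linf_eq_infnorm infnorm_sub)

lemma linf_less_iff: "linf (x::real^'n::finite) < r \<longleftrightarrow> (\<forall>i. \<bar>x$i\<bar> < r)"
  unfolding linf_def by simp

lemma linf_le_iff: "linf (x::real^'n::finite) \<le> r \<longleftrightarrow> (\<forall>i. \<bar>x$i\<bar> \<le> r)"
  unfolding linf_def by simp

lemma borel_measurable_linf[measurable]: "linf \<in> borel_measurable (borel :: (real^'n::finite) measure)"
  unfolding linf_eq_infnorm[abs_def] by (intro borel_measurable_continuous_onI continuous_intros)

lemma emeasure_linf_ball:
  fixes v :: "real^'n::finite"
  assumes "R \<ge> 0"
  shows "emeasure lborel {y. linf (y - v) < R} = ennreal ((2*R)^CARD('n))"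
proof -
  define a where "a = (\<chi> i. v$i - R)"
  define b where "b = (\<chi> i. v$i + R)"
  have ball: "{y. linf (y - v) < R} = box a b"
    by (auto simp: linf_less_iff mem_box_cart a_def b_def abs_less_iff) (metis add.commute diff_less_eq)+
  have "a \<in> cbox a b" using assms by (auto simp: mem_box_cart a_def b_def)
  then have "measure lborel (cbox a b) = (2*R)^CARD('n)"
    by (subst content_cbox_cart) (auto simp: a_def b_def)
  moreover have "emeasure lborel (box a b) = ennreal (measure lborel (cbox a b))"
    using emeasure_lborel_cbox_finite[of a b]
    by (simp add: emeasure_lborel_box_eq emeasure_lborel_cbox_eq[symmetric] emeasure_eq_ennreal_measure)
  ultimately show ?thesis unfolding ball by simp
qed

lemma decay_le_dyadic_shells:
  fixes s t r :: real
  assumes t: "t > 0" and s: "s \<ge> 0" and r: "r > 0"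
  shows "ennreal ((t/(t+s)) powr r) \<le> (\<Sum>k. ennreal ((2 / 2^k) powr r) * indicator {..<2^k*t} s)"
proof -
  have "\<exists>k::nat. s / t < 2^k" using real_arch_pow[of 2 "s/t"] by auto
  then have ex: "\<exists>k::nat. s < 2^k * t" using t by (simp add: divide_less_eq)
  define k where "k = (LEAST k::nat. s < 2^k * t)"
  have k_upper: "s < 2^k * t" unfolding k_def by (rule LeastI_ex[OF ex])
  have k_lower: "k > 0 \<Longrightarrow> 2^(k-1) * t \<le> s"
    using not_less_Least[of "k-1" "\<lambda>k. s < 2^k * t"] unfolding k_def[symmetric] by force
  have "(t/(t+s)) powr r \<le> (2 / 2^k) powr r"
  proof (cases "k = 0")
    case True
    have "(t/(t+s)) powr r \<le> 1 powr r" using t s r by (intro powr_mono2) auto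
    also have "\<dots> \<le> 2 powr r" using r by (simp add: ge_one_powr_ge_zero)
    finally show ?thesis using True by simp
  next
    case False
    then have "2^(k-1) * t \<le> t + s" using k_lower t by simp
    then have "t/(t+s) \<le> t / (2^(k-1)*t)" using t s by (intro divide_left_mono) auto
    also have "\<dots> = 2 / 2^k" using t False by (cases k) auto
    finally show ?thesis using t s r by (intro powr_mono2) auto
  qed
  then have "ennreal ((t/(t+s)) powr r) \<le> ennreal ((2 / 2^k) powr r) * indicator {..<2^k*t} s"
    using k_upper by (simp add: ennreal_leI)
  also have "\<dots> \<le> (\<Sum>k. ennreal ((2 / 2^k) powr r) * indicator {..<2^k*t} s)"
    by (meson ennreal_suminf_lessD not_le order_less_irrefl)
  finally show ?thesis .
qed

lemma dyadic_shell_term_eq: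
  fixes t r :: real and N k :: nat
  assumes "t > 0"
  shows "(2/2^k) powr r * (2*(2^k*t))^N = (t^N * 2 powr r * 2^N) * (2 powr (real N - r))^k"
proof -
  have "((2::real)^k) powr r = (2 powr r)^k"
    by (simp add: powr_realpow[symmetric] powr_powr mult.commute)
  then have a: "(2/2^k) powr r = 2 powr r / (2 powr r)^k"
    by (simp add: powr_divide)
  have b: "(2 powr (real N - r))^k = (2^N)^k / (2 powr r)^k"
    by (simp add: powr_diff power_divide powr_realpow)
  have "((2::real)^k)^N = (2^N)^k" by (metis power_mult mult.commute)
  then have c: "(2*(2^k*t))^N = 2^N * (2^N)^k * t^N"
    by (simp only: power_mult_distrib)
  show ?thesis unfolding a b c by (simp add: divide_simps)
qed

text \<open>The sum over the dyadic shells \<open>2^(k-1) t \<le> |y - v| < 2^k t\<close>, each contributing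
  \<open>(2/2^k)^r (2^(k+1) t)^N\<close>: a geometric series, convergent because \<open>r > N\<close>.\<close>

definition decay_const :: "nat \<Rightarrow> real \<Rightarrow> real" where
  "decay_const N r = 2 powr r * 2^N / (1 - 2 powr (real N - r))"

lemma decay_const_pos: "r > real N \<Longrightarrow> decay_const N r > 0"
  unfolding decay_const_def by (auto intro!: divide_pos_pos powr_less_one)

lemma nn_integral_decay_le:
  fixes v :: "real^'n::finite"
  assumes t: "t > 0" and r: "r > real CARD('n)"
  shows "(\<integral>\<^sup>+ y. ennreal ((t/(t+linf(y-v))) powr r) \<partial>lborel) \<le> ennreal (t^CARD('n) * decay_const CARD('n) r)"
proof -
  let ?N = "CARD('n)"
  let ?c = "\<lambda>k::nat. (2/2^k) powr r"
  let ?\<rho> = "2 powr (real ?N - r)"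
  have r0: "r > 0" using r by (metis of_nat_0_le_iff order_le_less_trans)
  have \<rho>: "?\<rho> < 1" "0 \<le> ?\<rho>" using r by (auto intro!: powr_less_one)
  have "(\<integral>\<^sup>+ y. ennreal ((t/(t+linf(y-v))) powr r) \<partial>lborel)
      \<le> (\<integral>\<^sup>+ y. (\<Sum>k. ennreal (?c k) * indicator {..<2^k*t} (linf (y-v))) \<partial>lborel)"
    by (intro nn_integral_mono decay_le_dyadic_shells) (use t r0 linf_nonneg in auto)
  also have "\<dots> = (\<Sum>k. \<integral>\<^sup>+ y. ennreal (?c k) * indicator {y. linf (y-v) < 2^k*t} y \<partial>lborel)"
    by (subst nn_integral_suminf) (auto simp: indicator_def intro!: suminf_cong nn_integral_cong)
  also have "\<dots> = (\<Sum>k. ennreal (?c k * (2*(2^k*t))^?N))"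
    using t by (intro suminf_cong) (simp add: nn_integral_cmult_indicator emeasure_linf_ball ennreal_mult)
  also have "\<dots> = (\<Sum>k. ennreal ((t^?N * 2 powr r * 2^?N) * ?\<rho>^k))"
    by (simp only: dyadic_shell_term_eq[OF t])
  also have "\<dots> = ennreal (\<Sum>k. (t^?N * 2 powr r * 2^?N) * ?\<rho>^k)"
    using \<rho> t by (intro suminf_ennreal2) (auto intro!: summable_mult summable_geometric)
  also have "(\<Sum>k. (t^?N * 2 powr r * 2^?N) * ?\<rho>^k) = (t^?N * 2 powr r * 2^?N) * (1 / (1 - ?\<rho>))"
    using \<rho> by (intro sums_unique[symmetric] sums_mult geometric_sums) auto
  finally show ?thesis by (simp add: decay_const_def mult.assoc)
qed

text \<open>Either \<open>t + a\<close> is comparable to \<open>t + c\<close>, or else \<open>b\<close> is large, and then the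
  weight \<open>(t/(t+b))^q\<close> alone supplies the decay.\<close>

lemma decay_product_split:
  fixes t a b c p q :: real
  assumes t: "t > 0" and a: "a \<ge> 0" and b: "b \<ge> 0" and c: "0 \<le> c" "c \<le> a + b"
    and p: "p > 0" and q: "q \<ge> p"
  shows "(t+a) powr (-p) * (t/(t+b)) powr q \<le> 2 powr p * (t+c) powr (-p) * ((t/(t+b)) powr q + (t/(t+a)) powr p)"
proof (cases "t + c \<le> 2*(t+a)")
  case True
  have "(t+a) powr (-p) \<le> ((t+c)/2) powr (-p)" using True t c p by (intro powr_mono2') auto
  also have "\<dots> = (t+c) powr (-p) / 2 powr (-p)" by (rule powr_divide)
  also have "\<dots> = 2 powr p * (t+c) powr (-p)" by (simp add: powr_minus divide_inverse mult.commute)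
  finally have near: "(t+a) powr (-p) \<le> 2 powr p * (t+c) powr (-p)" .
  have "(t+a) powr (-p) * (t/(t+b)) powr q \<le> 2 powr p * (t+c) powr (-p) * (t/(t+b)) powr q"
    by (rule mult_right_mono[OF near]) simp
  also have "\<dots> \<le> 2 powr p * (t+c) powr (-p) * ((t/(t+b)) powr q + (t/(t+a)) powr p)"
    by (intro mult_left_mono) auto
  finally show ?thesis .
next
  case False
  then have tc: "t + c < 2*(t+b)" using c a b t by argo
  have xb: "t/(t+b) \<le> 1" "0 \<le> t/(t+b)" using t b by auto
  have "(t/(t+b)) powr q \<le> (t/(t+b)) powr p" using xb q by (intro powr_mono') auto
  also have "\<dots> \<le> (2*t/(t+c)) powr p"
  proof (intro powr_mono2)
    have "2*t/(2*(t+b)) \<le> 2*t/(t+c)" by (rule divide_left_mono) (use tc t c b in auto)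
    moreover have "2*t/(2*(t+b)) = t/(t+b)" by (rule mult_divide_mult_cancel_left) simp
    ultimately show "t/(t+b) \<le> 2*t/(t+c)" by simp
  qed (use p xb in auto)
  finally have weight: "(t/(t+b)) powr q \<le> (2*t/(t+c)) powr p" .
  have "(t+a) powr (-p) * (t/(t+b)) powr q \<le> (t+a) powr (-p) * (2*t/(t+c)) powr p"
    by (rule mult_left_mono[OF weight]) simp
  also have "\<dots> = 2 powr p * (t+c) powr (-p) * (t/(t+a)) powr p"
  proof -
    have e1: "(2*t/(t+c)) powr p = 2 powr p * t powr p / (t+c) powr p" by (simp add: powr_divide powr_mult)
    have e2: "(t/(t+a)) powr p = t powr p / (t+a) powr p" by (rule powr_divide)
    have e3: "(t+a) powr (-p) = 1 / (t+a) powr p" "(t+c) powr (-p) = 1 / (t+c) powr p" by (rule powr_minus_divide)+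
    show ?thesis unfolding e1 e2 e3 by simp
  qed
  also have "\<dots> \<le> 2 powr p * (t+c) powr (-p) * ((t/(t+b)) powr q + (t/(t+a)) powr p)"
    by (intro mult_left_mono) auto
  finally show ?thesis .
qed

lemma nn_integral_decay_convolution_le:
  fixes u :: "real^'n::finite"
  assumes t: "t > 0" and p: "p > real CARD('n)" and q: "q \<ge> p"
  shows "(\<integral>\<^sup>+ y. ennreal ((t + linf(u - y)) powr (-p) * (t/(t+linf y)) powr q / t^CARD('n)) \<partial>lborel)
     \<le> ennreal (2 powr p * (decay_const CARD('n) q + decay_const CARD('n) p) * (t + linf u) powr (-p))"
proof -
  let ?N = "CARD('n)"
  define c where "c = 2 powr p * (t + linf u) powr (-p) / t^?N"
  have c0: "c \<ge> 0" unfolding c_def using t by simp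
  have p0: "p > 0" using p by (metis of_nat_0_le_iff order_le_less_trans)
  have "ennreal ((t + linf(u - y)) powr (-p) * (t/(t+linf y)) powr q / t^?N)
     \<le> ennreal c * ennreal ((t/(t+linf y)) powr q) + ennreal c * ennreal ((t/(t+linf(y-u))) powr p)" for y
  proof -
    have "linf u \<le> linf (u - y) + linf y" using linf_triangle[of "u-y" y] by simp
    then have "(t + linf(u - y)) powr (-p) * (t/(t+linf y)) powr q
       \<le> 2 powr p * (t + linf u) powr (-p) * ((t/(t+linf y)) powr q + (t/(t+linf(u-y))) powr p)"
      by (intro decay_product_split) (use t linf_nonneg p0 q in auto)
    then have "(t + linf(u - y)) powr (-p) * (t/(t+linf y)) powr q / t^?N
       \<le> c * (t/(t+linf y)) powr q + c * (t/(t+linf(y-u))) powr p"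
      using t by (simp add: c_def linf_minus_commute[of u y] divide_right_mono field_simps)
    then have "ennreal ((t + linf(u - y)) powr (-p) * (t/(t+linf y)) powr q / t^?N)
       \<le> ennreal (c * (t/(t+linf y)) powr q + c * (t/(t+linf(y-u))) powr p)"
      by (rule ennreal_leI)
    also have "\<dots> = ennreal c * ennreal ((t/(t+linf y)) powr q) + ennreal c * ennreal ((t/(t+linf(y-u))) powr p)"
      using c0 by (simp add: ennreal_plus ennreal_mult)
    finally show ?thesis .
  qed
  then have "(\<integral>\<^sup>+ y. ennreal ((t + linf(u - y)) powr (-p) * (t/(t+linf y)) powr q / t^?N) \<partial>lborel)
     \<le> (\<integral>\<^sup>+ y. ennreal c * ennreal ((t/(t+linf y)) powr q)
          + ennreal c * ennreal ((t/(t+linf(y-u))) powr p) \<partial>lborel)"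
    by (rule nn_integral_mono)
  also have "\<dots> = (\<integral>\<^sup>+ y. ennreal c * ennreal ((t/(t+linf (y::real^'n))) powr q) \<partial>lborel)
       + (\<integral>\<^sup>+ y. ennreal c * ennreal ((t/(t+linf(y-u))) powr p) \<partial>lborel)"
    by (rule nn_integral_add) measurable
  also have "\<dots> = ennreal c * (\<integral>\<^sup>+ y. ennreal ((t/(t+linf (y::real^'n))) powr q) \<partial>lborel)
       + ennreal c * (\<integral>\<^sup>+ y. ennreal ((t/(t+linf(y-u))) powr p) \<partial>lborel)"
    by (simp add: nn_integral_cmult)
  also have "\<dots> \<le> ennreal c * ennreal (t^?N * decay_const ?N q) + ennreal c * ennreal (t^?N * decay_const ?N p)"
    using nn_integral_decay_le[OF t, of q "0::real^'n"] nn_integral_decay_le[OF t p, of u] p q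
    by (intro add_mono mult_left_mono) auto
  also have "\<dots> = ennreal (c * (t^?N * decay_const ?N q) + c * (t^?N * decay_const ?N p))"
    using c0 t decay_const_pos[of ?N q] decay_const_pos[of ?N p] p q by (simp add: ennreal_plus ennreal_mult)
  also have "c * (t^?N * decay_const ?N q) + c * (t^?N * decay_const ?N p)
      = 2 powr p * (decay_const ?N q + decay_const ?N p) * (t + linf u) powr (-p)"
    using t unfolding c_def by (simp add: field_simps)
  finally show ?thesis .
qed

section \<open>Integrals on products of Euclidean spaces\<close>

lemma borel_measurable_tensor:
  fixes \<phi> :: "'a::second_countable_topology \<Rightarrow> real" and \<psi> :: "'b::second_countable_topology \<Rightarrow> real"
  assumes [measurable]: "\<phi> \<in> borel_measurable borel" "\<psi> \<in> borel_measurable borel"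
  shows "(\<lambda>z. \<phi> (fst z) * \<psi> (snd z)) \<in> borel_measurable borel"
  unfolding borel_prod[symmetric] by measurable

lemma nn_integral_lborel_tensor:
  fixes a :: "'a::euclidean_space \<Rightarrow> ennreal" and b :: "'b::euclidean_space \<Rightarrow> ennreal"
  assumes [measurable]: "a \<in> borel_measurable borel" "b \<in> borel_measurable borel"
  shows "(\<integral>\<^sup>+ z. a (fst z) * b (snd z) \<partial>lborel) = (\<integral>\<^sup>+ x. a x \<partial>lborel) * (\<integral>\<^sup>+ y. b y \<partial>lborel)"
proof -
  have "(\<integral>\<^sup>+ z. a (fst z) * b (snd z) \<partial>lborel) = (\<integral>\<^sup>+ z. a (fst z) * b (snd z) \<partial>(lborel \<Otimes>\<^sub>M lborel))"
    by (simp add: lborel_prod)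
  also have "\<dots> = (\<integral>\<^sup>+ x. \<integral>\<^sup>+ y. a x * b y \<partial>lborel \<partial>lborel)"
    by (subst lborel.nn_integral_fst[symmetric]) (auto simp: measurable_split_conv)
  also have "\<dots> = (\<integral>\<^sup>+ x. a x \<partial>lborel) * (\<integral>\<^sup>+ y. b y \<partial>lborel)"
    by (simp add: nn_integral_cmult nn_integral_multc)
  finally show ?thesis .
qed

lemma nn_integral_lborel_tensor_cmult:
  fixes a :: "'a::euclidean_space \<Rightarrow> ennreal" and b :: "'b::euclidean_space \<Rightarrow> ennreal"
  assumes a: "a \<in> borel_measurable borel" and b: "b \<in> borel_measurable borel"
  shows "(\<integral>\<^sup>+ z. c * (a (fst z) * b (snd z)) \<partial>lborel) = c * ((\<integral>\<^sup>+ x. a x \<partial>lborel) * (\<integral>\<^sup>+ y. b y \<partial>lborel))"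
proof -
  have "(\<lambda>z. a (fst z)) \<in> borel_measurable (borel :: ('a \<times> 'b) measure)"
    by (rule measurable_compose[OF borel_measurable_continuous_onI[OF continuous_on_fst[OF continuous_on_id]] a])
  moreover have "(\<lambda>z. b (snd z)) \<in> borel_measurable (borel :: ('a \<times> 'b) measure)"
    by (rule measurable_compose[OF borel_measurable_continuous_onI[OF continuous_on_snd[OF continuous_on_id]] b])
  ultimately have "(\<lambda>z. a (fst z) * b (snd z)) \<in> borel_measurable lborel"
    by simp
  then show ?thesis
    unfolding nn_integral_lborel_tensor[OF a b, symmetric] by (rule nn_integral_cmult)
qed

lemma integrable_tensor:
  fixes \<phi> :: "'a::euclidean_space \<Rightarrow> real" and \<psi> :: "'b::euclidean_space \<Rightarrow> real"
  assumes \<phi>: "integrable lborel \<phi>" and \<psi>: "integrable lborel \<psi>"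
  shows "integrable lborel (\<lambda>z. \<phi> (fst z) * \<psi> (snd z))"
proof (rule integrableI_bounded)
  have [measurable]: "\<phi> \<in> borel_measurable borel" "\<psi> \<in> borel_measurable borel"
    using \<phi> \<psi> by (auto dest: borel_measurable_integrable)
  show "(\<lambda>z. \<phi> (fst z) * \<psi> (snd z)) \<in> borel_measurable lborel"
    using borel_measurable_tensor[of \<phi> \<psi>] by simp
  have "(\<lambda>x. ennreal \<bar>\<phi> x\<bar>) \<in> borel_measurable borel" "(\<lambda>y. ennreal \<bar>\<psi> y\<bar>) \<in> borel_measurable borel"
    by measurable
  from nn_integral_lborel_tensor[OF this]
  have "(\<integral>\<^sup>+ z. ennreal (norm (\<phi> (fst z) * \<psi> (snd z))) \<partial>lborel)
      = (\<integral>\<^sup>+ x. ennreal (norm (\<phi> x)) \<partial>lborel) * (\<integral>\<^sup>+ y. ennreal (norm (\<psi> y)) \<partial>lborel)"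
    by (simp add: abs_mult ennreal_mult)
  also have "\<dots> < \<infinity>"
    using \<phi> \<psi> by (simp add: integrable_iff_bounded ennreal_mult_less_top)
  finally show "(\<integral>\<^sup>+ z. ennreal (norm (\<phi> (fst z) * \<psi> (snd z))) \<partial>lborel) < \<infinity>" .
qed

lemma integral_tensor:
  fixes \<phi> :: "'a::euclidean_space \<Rightarrow> real" and \<psi> :: "'b::euclidean_space \<Rightarrow> real"
  assumes \<phi>: "integrable lborel \<phi>" and \<psi>: "integrable lborel \<psi>"
  shows "(LINT z|lborel. \<phi> (fst z) * \<psi> (snd z)) = (LINT x|lborel. \<phi> x) * (LINT y|lborel. \<psi> y)"
proof -
  have "integrable (lborel \<Otimes>\<^sub>M lborel) (\<lambda>(x, y). \<phi> x * \<psi> y)"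
    using integrable_tensor[OF \<phi> \<psi>] by (simp add: lborel_prod case_prod_beta')
  then have "(LINT x|lborel. LINT y|lborel. \<phi> x * \<psi> y) = integral\<^sup>L (lborel \<Otimes>\<^sub>M lborel) (\<lambda>(x, y). \<phi> x * \<psi> y)"
    by (rule lborel_pair.integral_fst)
  then show ?thesis by (simp add: lborel_prod case_prod_beta')
qed

lemma integrable_bounded_mult:
  fixes f h :: "'a \<Rightarrow> real"
  assumes "integrable M h" "(\<lambda>x. f x * h x) \<in> borel_measurable M" "\<And>x. \<bar>f x\<bar> \<le> B"
  shows "integrable M (\<lambda>x. f x * h x)"
  using assms(2,3) by (intro Bochner_Integration.integrable_bound[OF integrable_mult_right[OF assms(1), of B]])
    (auto simp: abs_mult intro!: AE_I2 mult_right_mono order_trans[OF assms(3) abs_ge_self])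

lemma abs_integral_mult_le:
  fixes d f :: "'a \<Rightarrow> real"
  assumes f_meas: "f \<in> borel_measurable M" and d_le: "\<And>x. f x \<noteq> 0 \<Longrightarrow> \<bar>d x\<bar> \<le> B"
    and f_L1: "(\<integral>\<^sup>+ x. ennreal \<bar>f x\<bar> \<partial>M) \<le> ennreal S" and nonneg: "B \<ge> 0" "S \<ge> 0"
  shows "\<bar>LINT x|M. d x * f x\<bar> \<le> B * S"
proof -
  have "ennreal \<bar>LINT x|M. d x * f x\<bar> \<le> (\<integral>\<^sup>+ x. ennreal \<bar>d x * f x\<bar> \<partial>M)"
    using integral_norm_bound_ennreal[of M "\<lambda>x. d x * f x"]
    by (cases "integrable M (\<lambda>x. d x * f x)") (auto simp: not_integrable_integral_eq)
  also have "\<dots> \<le> (\<integral>\<^sup>+ x. ennreal B * ennreal \<bar>f x\<bar> \<partial>M)"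
  proof (rule nn_integral_mono)
    fix x
    have "\<bar>d x * f x\<bar> \<le> B * \<bar>f x\<bar>"
      using d_le[of x] by (cases "f x = 0") (auto simp: abs_mult intro: mult_right_mono)
    then show "ennreal \<bar>d x * f x\<bar> \<le> ennreal B * ennreal \<bar>f x\<bar>"
      using nonneg by (simp add: ennreal_mult[symmetric] ennreal_leI)
  qed
  also have "\<dots> = ennreal B * (\<integral>\<^sup>+ x. ennreal \<bar>f x\<bar> \<partial>M)"
    using f_meas by (intro nn_integral_cmult) measurable
  also have "\<dots> \<le> ennreal B * ennreal S"
    using f_L1 by (rule mult_left_mono) simp
  finally show ?thesis
    using nonneg by (simp add: ennreal_mult[symmetric] ennreal_le_iff)
qed

lemma integral_lborel_translate:
  fixes g :: "'a::euclidean_space \<Rightarrow> real"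
  assumes "g \<in> borel_measurable borel"
  shows "(LINT x|lborel. g (x - e)) = (LINT x|lborel. g x)"
proof -
  have "(LINT x|lborel. g x) = integral\<^sup>L (distr lborel borel ((+) (-e))) g"
    by (simp add: lborel_distr_plus)
  also have "\<dots> = (LINT x|lborel. g (x - e))"
    using assms by (subst integral_distr) auto
  finally show ?thesis by simp
qed

lemma
  fixes G :: "'a::topological_space \<times> 'b::topological_space \<Rightarrow> real"
  assumes "G \<in> borel_measurable borel"
  shows borel_measurable_section1: "(\<lambda>x. G (x, b)) \<in> borel_measurable borel"
    and borel_measurable_section2: "(\<lambda>y. G (a, y)) \<in> borel_measurable borel"
proof -
  show "(\<lambda>x. G (x, b)) \<in> borel_measurable borel"
    by (rule measurable_compose[OF borel_measurable_continuous_onI assms]) (intro continuous_intros)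
  show "(\<lambda>y. G (a, y)) \<in> borel_measurable borel"
    by (rule measurable_compose[OF borel_measurable_continuous_onI assms]) (intro continuous_intros)
qed

text \<open>The kernel \<open>g\<close> need not be measurable: its sections through \<open>c1\<close> and \<open>c2\<close> are
  recovered from the integrable product by dividing by \<open>h1 c1\<close> resp. \<open>h2 c2\<close>.\<close>

lemma integral_tensor_double_difference:
  fixes g :: "'a::euclidean_space \<times> 'b::euclidean_space \<Rightarrow> real" and h1 :: "'a \<Rightarrow> real" and h2 :: "'b \<Rightarrow> real"
  assumes h1: "integrable lborel h1" "integral\<^sup>L lborel h1 = 0" "h1 c1 \<noteq> 0"
    and h2: "integrable lborel h2" "integral\<^sup>L lborel h2 = 0" "h2 c2 \<noteq> 0"
    and g_bounded: "\<And>z. \<bar>g z\<bar> \<le> B"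
    and g_integrable: "integrable lborel (\<lambda>z. g z * (h1 (fst z) * h2 (snd z)))"
  shows "(LINT z|lborel. g z * (h1 (fst z) * h2 (snd z)))
       = (LINT z|lborel. (g z - g (fst z, c2) - g (c1, snd z) + g (c1, c2)) * (h1 (fst z) * h2 (snd z)))"
proof -
  define G where "G z = g z * (h1 (fst z) * h2 (snd z))" for z
  have G_meas: "G \<in> borel_measurable borel"
    using borel_measurable_integrable[OF g_integrable] by (simp add: G_def[abs_def])
  have "(\<lambda>x. g (x, c2) * h1 x) = (\<lambda>x. G (x, c2) / h2 c2)"
    using h2(3) by (auto simp: G_def)
  then have section1: "integrable lborel (\<lambda>x. g (x, c2) * h1 x)"
    using borel_measurable_section1[OF G_meas, of c2] g_bounded
    by (intro integrable_bounded_mult[OF h1(1)]) auto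
  have "(\<lambda>y. g (c1, y) * h2 y) = (\<lambda>y. G (c1, y) / h1 c1)"
    using h1(3) by (auto simp: G_def)
  then have section2: "integrable lborel (\<lambda>y. g (c1, y) * h2 y)"
    using borel_measurable_section2[OF G_meas, of c1] g_bounded
    by (intro integrable_bounded_mult[OF h2(1)]) auto
  define T1 where "T1 z = g (fst z, c2) * h1 (fst z) * h2 (snd z)" for z
  define T2 where "T2 z = h1 (fst z) * (g (c1, snd z) * h2 (snd z))" for z
  define T3 where "T3 z = h1 (fst z) * h2 (snd z)" for z
  have T1: "integrable lborel T1" "integral\<^sup>L lborel T1 = 0"
    using integrable_tensor[OF section1 h2(1)] integral_tensor[OF section1 h2(1)] h2(2)
    by (simp_all add: T1_def[abs_def])
  have T2: "integrable lborel T2" "integral\<^sup>L lborel T2 = 0"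
    using integrable_tensor[OF h1(1) section2] integral_tensor[OF h1(1) section2] h1(2)
    by (simp_all add: T2_def[abs_def])
  have T3: "integrable lborel T3" "integral\<^sup>L lborel T3 = 0"
    using integrable_tensor[OF h1(1) h2(1)] integral_tensor[OF h1(1) h2(1)] h1(2)
    by (simp_all add: T3_def[abs_def])
  have "(\<lambda>z. (g z - g (fst z, c2) - g (c1, snd z) + g (c1, c2)) * (h1 (fst z) * h2 (snd z)))
      = (\<lambda>z. G z - T1 z - T2 z + g (c1, c2) * T3 z)"
    by (auto simp: G_def T1_def T2_def T3_def algebra_simps)
  then show ?thesis
    using g_integrable T1 T2 T3 by (simp add: G_def[symmetric])
qed

section \<open>Dyadic cubes and Haar functions\<close>

lemma dside_pos: "dside k > 0"
  unfolding dside_def by simp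

lemma dside_le_half: "dside k1 < dside k2 \<Longrightarrow> dside k1 \<le> dside k2 / 2"
proof -
  assume "dside k1 < dside k2"
  then have "- real_of_int k1 < - real_of_int k2" unfolding dside_def by simp
  then have "k2 + 1 \<le> k1" by linarith
  then have "- real_of_int k1 \<le> - real_of_int k2 - 1" by linarith
  then have "dside k1 \<le> 2 powr (- real_of_int k2 - 1)" unfolding dside_def by simp
  also have "\<dots> = dside k2 / 2" unfolding dside_def by (simp add: powr_diff)
  finally show ?thesis .
qed

lemma mem_dcube_iff:
  "x \<in> dcube k j \<longleftrightarrow> (\<forall>i. x$i \<in> {real_of_int (j i) * dside k ..< real_of_int (j i) * dside k + dside k})"
proof -
  have "x \<in> dcube k j \<longleftrightarrow> (\<forall>i. real_of_int (j i) * dside k \<le> x $ i \<and> x $ i < (real_of_int (j i) + 1) * dside k)"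
    unfolding dcube_def by (rule mem_Collect_eq)
  then show ?thesis by (simp add: distrib_right)
qed

definition dcenter :: "int \<Rightarrow> ('n::finite \<Rightarrow> int) \<Rightarrow> real^'n" where
  "dcenter k j = (\<chi> i. (real_of_int (j i) + 1/2) * dside k)"

lemma dcenter_in_dcube: "dcenter k j \<in> dcube k j"
  using dside_pos[of k] unfolding mem_dcube_iff dcenter_def by (auto simp: algebra_simps)

lemma linf_dcenter_le: "x \<in> dcube k j \<Longrightarrow> linf (x - dcenter k j) \<le> dside k / 2"
  unfolding linf_le_iff
proof
  fix i assume "x \<in> dcube k j"
  then have "real_of_int (j i) * dside k \<le> x$i" "x$i < real_of_int (j i) * dside k + dside k"
    unfolding mem_dcube_iff by auto
  moreover have "(x - dcenter k j)$i = x$i - (real_of_int (j i) * dside k + dside k / 2)"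
    by (simp add: dcenter_def algebra_simps)
  ultimately show "\<bar>(x - dcenter k j)$i\<bar> \<le> dside k / 2" unfolding abs_le_iff by linarith
qed

lemma
  fixes A B :: "(real^'n::finite) set"
  assumes "a \<in> A" "b \<in> B"
  shows cdist_le_linf: "cdist A B \<le> linf (b - a)" and cdist_nonneg: "0 \<le> cdist A B"
proof -
  let ?S = "{linf (x - y) | x y. x \<in> A \<and> y \<in> B}"
  have bdd: "bdd_below ?S" by (rule bdd_belowI[of _ 0]) (auto simp: linf_nonneg)
  have mem: "linf (b - a) \<in> ?S" using assms by (auto simp: linf_minus_commute[of b a])
  show "cdist A B \<le> linf (b - a)" unfolding cdist_def by (rule cInf_lower[OF mem bdd])
  show "0 \<le> cdist A B" unfolding cdist_def using mem by (intro cInf_greatest) (auto simp: linf_nonneg)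
qed

lemma borel_measurable_haar[measurable]: "haar k j eta \<in> borel_measurable borel"
proof -
  have nth: "(\<lambda>x::real^'n. x$i) \<in> borel_measurable borel" for i
    by (intro borel_measurable_continuous_onI linear_continuous_on bounded_linear_vec_nth)
  have factor: "haar1 a l e \<in> borel_measurable borel" for a l e
    by (cases e) (simp_all add: haar1_def[abs_def])
  show ?thesis
    unfolding haar_def[abs_def] by (intro borel_measurable_prod measurable_compose[OF nth factor])
qed

lemma abs_haar_le:
  fixes x :: "real^'n::finite"
  shows "\<bar>haar k j eta x\<bar> \<le> indicator (dcube k j) x / sqrt (dside k ^ CARD('n))"
proof -
  let ?l = "dside k"
  let ?I = "\<lambda>i. {real_of_int (j i) * ?l ..< real_of_int (j i) * ?l + ?l}"
  have "\<bar>haar k j eta x\<bar> = (\<Prod>i\<in>UNIV. \<bar>haar1 (real_of_int (j i) * ?l) ?l (eta i) (x$i)\<bar>)"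
    unfolding haar_def by (simp add: abs_prod)
  also have "\<dots> \<le> (\<Prod>i\<in>UNIV. indicator (?I i) (x$i) / sqrt ?l)"
    unfolding haar1_def by (intro prod_mono) (auto simp: indicator_def)
  also have "\<dots> = (\<Prod>i\<in>UNIV. indicator (?I i) (x$i)) / sqrt ?l ^ CARD('n)"
    by (simp add: prod_dividef)
  also have "(\<Prod>i\<in>UNIV. indicator (?I i) (x$i) :: real) = indicator (dcube k j) x"
  proof (cases "x \<in> dcube k j")
    case True
    then have "\<forall>i. x$i \<in> ?I i" using mem_dcube_iff by blast
    then show ?thesis using True by (simp add: indicator_def)
  next
    case False
    then obtain i where "x$i \<notin> ?I i" unfolding mem_dcube_iff by blast
    then have "indicator (?I i) (x$i) = (0::real)" by simp
    then show ?thesis using False by (simp add: prod_zero_iff) blast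
  qed
  finally show ?thesis by (simp add: real_sqrt_power)
qed

lemma haar_nonzero:
  assumes "x \<in> dcube k j"
  shows "haar k j eta x \<noteq> 0"
proof -
  have "haar1 (real_of_int (j i) * dside k) (dside k) (eta i) (x $ i) \<noteq> 0" for i
    using assms dside_pos[of k] unfolding mem_dcube_iff haar1_def by (auto simp: indicator_def)
  then show ?thesis unfolding haar_def by simp
qed

lemma haar_nonzero_imp_mem: "haar k j eta x \<noteq> 0 \<Longrightarrow> x \<in> dcube k j"
  using abs_haar_le[of k j eta x] by (cases "x \<in> dcube k j") auto

lemma nn_integral_abs_haar_le:
  "(\<integral>\<^sup>+ x. ennreal \<bar>haar k j eta (x::real^'n::finite)\<bar> \<partial>lborel) \<le> ennreal (sqrt (dside k ^ CARD('n)))"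
proof -
  let ?l = "dside k"
  let ?v = "?l ^ CARD('n)"
  define a :: "real^'n" where "a = (\<chi> i. real_of_int (j i) * ?l)"
  define b :: "real^'n" where "b = (\<chi> i. real_of_int (j i) * ?l + ?l)"
  have l: "?l > 0" by (rule dside_pos)
  have sub: "dcube k j \<subseteq> cbox a b"
    by (auto simp: mem_dcube_iff mem_box_cart a_def b_def less_imp_le)
  have "a \<in> cbox a b" using l by (auto simp: mem_box_cart a_def b_def)
  then have "measure lborel (cbox a b) = ?v"
    by (subst content_cbox_cart) (auto simp: a_def b_def)
  then have box: "emeasure lborel (cbox a b) = ennreal ?v"
    using emeasure_lborel_cbox_finite[of a b] by (simp add: emeasure_eq_ennreal_measure)
  have "(\<integral>\<^sup>+ x. ennreal \<bar>haar k j eta x\<bar> \<partial>lborel)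
      \<le> (\<integral>\<^sup>+ x. ennreal (1 / sqrt ?v) * indicator (cbox a b) x \<partial>lborel)"
  proof (intro nn_integral_mono)
    fix x :: "real^'n"
    have "\<bar>haar k j eta x\<bar> \<le> indicator (dcube k j) x / sqrt ?v" by (rule abs_haar_le)
    also have "\<dots> \<le> indicator (cbox a b) x / sqrt ?v"
      using sub l by (intro divide_right_mono) (auto simp: indicator_def)
    finally have "\<bar>haar k j eta x\<bar> \<le> indicator (cbox a b) x / sqrt ?v" .
    then show "ennreal \<bar>haar k j eta x\<bar> \<le> ennreal (1 / sqrt ?v) * indicator (cbox a b) x"
      by (auto simp: indicator_def intro: ennreal_leI)
  qed
  also have "\<dots> = ennreal (1 / sqrt ?v * ?v)"
    using l by (simp add: nn_integral_cmult_indicator box ennreal_mult[symmetric])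
  also have "1 / sqrt ?v * ?v = sqrt ?v"
    using l by (simp add: field_simps real_div_sqrt)
  finally show ?thesis .
qed

lemma integrable_haar: "integrable lborel (haar k j eta :: real^'n::finite \<Rightarrow> real)"
  using nn_integral_abs_haar_le[of k j eta] by (intro integrableI_bounded) (auto simp: le_less_trans)

text \<open>Averaging \<open>h\<close> with its non-cancellative version in a direction \<open>i0\<close> where \<open>eta i0\<close>
  gives its restriction \<open>g\<close> to the left half in that direction, and \<open>h = g - g(\<cdot> - e)\<close>.\<close>

lemma haar_eq_half_difference:
  fixes k :: int and j :: "'n::finite \<Rightarrow> int" and x :: "real^'n"
  assumes i0: "eta i0"
  defines "g \<equiv> \<lambda>x. (haar k j (eta(i0 := False)) x + haar k j eta x) / 2"
    and "e \<equiv> axis i0 (dside k / 2)"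
  shows "haar k j eta x = g x - g (x - e)"
proof -
  let ?l = "dside k"
  let ?a = "\<lambda>i. real_of_int (j i) * ?l"
  define P where "P x = (\<Prod>i\<in>UNIV-{i0}. haar1 (?a i) ?l (eta i) (x$i))" for x :: "real^'n"
  have haar_split: "haar k j eta x = haar1 (?a i0) ?l True (x$i0) * P x" for x
    unfolding haar_def P_def using i0 by (simp add: prod.remove[of UNIV i0])
  have haar'_split: "haar k j (eta(i0 := False)) x = haar1 (?a i0) ?l False (x$i0) * P x" for x
  proof -
    have "haar k j (eta(i0 := False)) x
        = haar1 (?a i0) ?l False (x$i0) * (\<Prod>i\<in>UNIV-{i0}. haar1 (?a i) ?l ((eta(i0 := False)) i) (x$i))"
      unfolding haar_def by (simp add: prod.remove[of UNIV i0])
    also have "(\<Prod>i\<in>UNIV-{i0}. haar1 (?a i) ?l ((eta(i0 := False)) i) (x$i)) = P x"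
      unfolding P_def by (intro prod.cong) auto
    finally show ?thesis .
  qed
  have P_shift: "P (x - e) = P x" for x
    unfolding P_def e_def by (intro prod.cong) (auto simp: axis_def)
  have g_eq: "g x = indicator {?a i0..<?a i0 + ?l/2} (x$i0) / sqrt ?l * P x" for x
    unfolding g_def haar_split haar'_split haar1_def by (auto simp: indicator_def field_simps)
  have "(x - e)$i0 = x$i0 - ?l/2" by (simp add: e_def)
  then show ?thesis
    unfolding g_eq P_shift haar_split haar1_def by (auto simp: indicator_def field_simps)
qed

lemma integral_haar_eq_0:
  assumes "eta \<noteq> (\<lambda>_. False)"
  shows "(LINT x|lborel. haar k j eta (x::real^'n::finite)) = 0"
proof -
  obtain i0 where i0: "eta i0" using assms by auto
  define g where "g x = (haar k j (eta(i0 := False)) x + haar k j eta x) / 2" for x :: "real^'n"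
  define e :: "real^'n" where "e = axis i0 (dside k / 2)"
  have haar_eq: "haar k j eta x = g x - g (x - e)" for x
    unfolding g_def[abs_def] e_def by (rule haar_eq_half_difference[where eta=eta, OF i0])
  have g_int: "integrable lborel g"
    unfolding g_def[abs_def] by (intro integrable_divide Bochner_Integration.integrable_add integrable_haar)
  have "integrable lborel (\<lambda>x. g (x - e))"
    using Bochner_Integration.integrable_diff[OF g_int integrable_haar[of k j eta]] by (simp add: haar_eq)
  moreover have "(LINT x|lborel. g (x - e)) = (LINT x|lborel. g x)"
    using borel_measurable_integrable[OF g_int] by (intro integral_lborel_translate) simp
  ultimately show ?thesis
    using g_int by (simp add: haar_eq)
qed

section \<open>The kernel estimates\<close>

lemma
  fixes K :: "('n::finite, 'm::finite) kernel"
  assumes "assumption1 C \<alpha> \<beta> K" "t1 > 0" "t2 > 0"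
  shows assumption1_size:
      "\<bar>K t1 t2 (x1, x2) (y1, y2)\<bar>
         \<le> C * (t1 powr \<alpha> / (t1 + linf (x1 - y1)) powr (real CARD('n) + \<alpha>))
              * (t2 powr \<beta> / (t2 + linf (x2 - y2)) powr (real CARD('m) + \<beta>))"
    and assumption1_double_difference:
      "linf (y1 - y1') < t1 / 2 \<Longrightarrow> linf (y2 - y2') < t2 / 2 \<Longrightarrow>
        \<bar>K t1 t2 (x1, x2) (y1, y2) - K t1 t2 (x1, x2) (y1, y2')
          - K t1 t2 (x1, x2) (y1', y2) + K t1 t2 (x1, x2) (y1', y2')\<bar>
         \<le> C * (linf (y1 - y1') powr \<alpha> / (t1 + linf (x1 - y1)) powr (real CARD('n) + \<alpha>))
              * (linf (y2 - y2') powr \<beta> / (t2 + linf (x2 - y2)) powr (real CARD('m) + \<beta>))"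
  using assms(1)[unfolded assumption1_def, rule_format, OF assms(2,3)] by blast+

lemma assumption1_const_nonneg:
  assumes "assumption1 C \<alpha> \<beta> (K :: ('n::finite, 'm::finite) kernel)"
  shows "C \<ge> 0"
proof -
  have "0 \<le> C * (1 / (1 + linf (0::real^'n)) powr (real CARD('n) + \<alpha>))
              * (1 / (1 + linf (0::real^'m)) powr (real CARD('m) + \<beta>))"
    using assumption1_size[OF assms, of 1 1 0 0 0 0] by simp
  then show ?thesis by (simp add: linf_def zero_le_mult_iff)
qed

lemma assumption1_uniform_bound:
  fixes K :: "('n::finite, 'm::finite) kernel"
  assumes K: "assumption1 C \<alpha> \<beta> K" and t: "t1 > 0" "t2 > 0" and "\<alpha> \<ge> 0" "\<beta> \<ge> 0"
  shows "\<bar>K t1 t2 x y\<bar> \<le> C / (t1 powr real CARD('n) * t2 powr real CARD('m))"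
proof -
  have decay_le: "t powr a / (t + r) powr (N + a) \<le> 1 / t powr N"
    if "t > 0" "r \<ge> 0" "a \<ge> 0" "N \<ge> 0" for t r a N :: real
  proof -
    have "t powr a / (t + r) powr (N + a) \<le> t powr a / t powr (N + a)"
      using that by (intro divide_left_mono powr_mono2) auto
    also have "\<dots> = 1 / t powr N" using that by (simp add: powr_add)
    finally show ?thesis .
  qed
  obtain x1 x2 y1 y2 where xy: "x = (x1, x2)" "y = (y1, y2)" by fastforce
  have "\<bar>K t1 t2 (x1, x2) (y1, y2)\<bar>
         \<le> C * (t1 powr \<alpha> / (t1 + linf (x1 - y1)) powr (real CARD('n) + \<alpha>))
              * (t2 powr \<beta> / (t2 + linf (x2 - y2)) powr (real CARD('m) + \<beta>))"
    by (rule assumption1_size[OF K t])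
  also have "\<dots> \<le> C * (1 / t1 powr real CARD('n)) * (1 / t2 powr real CARD('m))"
    using assumption1_const_nonneg[OF K] t assms(4,5) linf_nonneg[of "x1-y1"] linf_nonneg[of "x2-y2"]
    by (intro mult_mono decay_le mult_nonneg_nonneg) auto
  finally show ?thesis using xy by simp
qed

lemma holder_decay_le:
  fixes A l t D E a p :: real
  assumes "0 \<le> A" "A \<le> l" "t + D \<le> 2 * (t + E)" "t > 0" "E \<ge> 0" "D \<ge> 0" "a \<ge> 0" "p \<ge> 0"
  shows "A powr a / (t + E) powr p \<le> 2 powr p * l powr a / (t + D) powr p"
proof -
  have "A powr a / (t + E) powr p \<le> l powr a / ((t + D)/2) powr p"
    using assms by (intro frac_le powr_mono2) auto
  also have "\<dots> = 2 powr p * l powr a / (t + D) powr p"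
    using assms by (simp add: powr_divide)
  finally show ?thesis .
qed

text \<open>The hypothesis \<open>dside k1 < t1\<close> puts every point of the cube within \<open>t1/2\<close> of its
  centre, where the double difference estimate of Assumption 1 applies.\<close>

lemma double_difference_on_dcubes_le:
  fixes K :: "('n::finite, 'm::finite) kernel"
  assumes K: "assumption1 C \<alpha> \<beta> K" and "\<alpha> \<ge> 0" "\<beta> \<ge> 0"
    and t: "dside k1 < t1" "dside l1 < t2"
    and z: "z1 \<in> dcube k1 j1" "z2 \<in> dcube l1 i1"
  defines "c1 \<equiv> dcenter k1 j1" and "c2 \<equiv> dcenter l1 i1"
  shows "\<bar>K t1 t2 (w1, w2) (z1, z2) - K t1 t2 (w1, w2) (z1, c2)
          - K t1 t2 (w1, w2) (c1, z2) + K t1 t2 (w1, w2) (c1, c2)\<bar>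
    \<le> C * (2 powr (real CARD('n) + \<alpha>) * dside k1 powr \<alpha> / (t1 + linf (w1 - c1)) powr (real CARD('n) + \<alpha>))
        * (2 powr (real CARD('m) + \<beta>) * dside l1 powr \<beta> / (t2 + linf (w2 - c2)) powr (real CARD('m) + \<beta>))"
proof -
  have d1: "linf (z1 - c1) \<le> dside k1 / 2" unfolding c1_def by (rule linf_dcenter_le[OF z(1)])
  have d2: "linf (z2 - c2) \<le> dside l1 / 2" unfolding c2_def by (rule linf_dcenter_le[OF z(2)])
  have t0: "t1 > 0" "t2 > 0" using t dside_pos[of k1] dside_pos[of l1] by linarith+
  have tri1: "linf (w1 - c1) \<le> linf (w1 - z1) + linf (z1 - c1)"
    using linf_triangle[of "w1 - z1" "z1 - c1"] by simp
  have tri2: "linf (w2 - c2) \<le> linf (w2 - z2) + linf (z2 - c2)"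
    using linf_triangle[of "w2 - z2" "z2 - c2"] by simp
  have "\<bar>K t1 t2 (w1, w2) (z1, z2) - K t1 t2 (w1, w2) (z1, c2)
          - K t1 t2 (w1, w2) (c1, z2) + K t1 t2 (w1, w2) (c1, c2)\<bar>
     \<le> C * (linf (z1 - c1) powr \<alpha> / (t1 + linf (w1 - z1)) powr (real CARD('n) + \<alpha>))
        * (linf (z2 - c2) powr \<beta> / (t2 + linf (w2 - z2)) powr (real CARD('m) + \<beta>))"
    by (rule assumption1_double_difference[OF K t0]) (use d1 d2 t in auto)
  also have "\<dots> \<le> C * (2 powr (real CARD('n) + \<alpha>) * dside k1 powr \<alpha> / (t1 + linf (w1 - c1)) powr (real CARD('n) + \<alpha>))
        * (2 powr (real CARD('m) + \<beta>) * dside l1 powr \<beta> / (t2 + linf (w2 - c2)) powr (real CARD('m) + \<beta>))"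
    using assumption1_const_nonneg[OF K] assms(2,3) d1 d2 tri1 tri2 t t0 dside_pos[of k1] dside_pos[of l1]
      linf_nonneg[of "z1 - c1"] linf_nonneg[of "w1 - z1"] linf_nonneg[of "w1 - c1"]
      linf_nonneg[of "z2 - c2"] linf_nonneg[of "w2 - z2"] linf_nonneg[of "w2 - c2"]
    by (intro mult_mono holder_decay_le mult_nonneg_nonneg) auto
  finally show ?thesis .
qed

lemma nn_integral_abs_haar_tensor_le:
  fixes eta :: "'n::finite \<Rightarrow> bool" and zeta :: "'m::finite \<Rightarrow> bool"
  shows "(\<integral>\<^sup>+ z. ennreal \<bar>haar k1 j1 eta (fst z) * haar l1 i1 zeta (snd z)\<bar> \<partial>lborel)
     \<le> ennreal (sqrt (dside k1 ^ CARD('n)) * sqrt (dside l1 ^ CARD('m)))"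
proof -
  have "(\<integral>\<^sup>+ z. ennreal \<bar>haar k1 j1 eta (fst z) * haar l1 i1 zeta (snd z)\<bar> \<partial>lborel)
      = (\<integral>\<^sup>+ x. ennreal \<bar>haar k1 j1 eta (x::real^'n)\<bar> \<partial>lborel)
        * (\<integral>\<^sup>+ y. ennreal \<bar>haar l1 i1 zeta (y::real^'m)\<bar> \<partial>lborel)"
    by (simp add: abs_mult ennreal_mult nn_integral_lborel_tensor[symmetric])
  also have "\<dots> \<le> ennreal (sqrt (dside k1 ^ CARD('n))) * ennreal (sqrt (dside l1 ^ CARD('m)))"
    by (intro mult_mono nn_integral_abs_haar_le) auto
  finally show ?thesis
    using dside_pos[of k1] dside_pos[of l1] by (simp add: ennreal_mult)
qed

lemma theta_haar_tensor_eq_double_difference: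
  fixes K :: "('n::finite, 'm::finite) kernel"
  assumes K: "assumption1 C \<alpha> \<beta> K" and \<alpha>\<beta>: "\<alpha> \<ge> 0" "\<beta> \<ge> 0"
    and t: "dside k1 < t1" "dside l1 < t2"
    and cancellative: "eta \<noteq> (\<lambda>_. False)" "zeta \<noteq> (\<lambda>_. False)"
    and integrable: "integrable lborel (\<lambda>z. K t1 t2 w z * (haar k1 j1 eta (fst z) * haar l1 i1 zeta (snd z)))"
  defines "c1 \<equiv> dcenter k1 j1" and "c2 \<equiv> dcenter l1 i1"
  shows "theta K t1 t2 (\<lambda>z. haar k1 j1 eta (fst z) * haar l1 i1 zeta (snd z)) w
    = (LINT z|lborel. (K t1 t2 w z - K t1 t2 w (fst z, c2) - K t1 t2 w (c1, snd z) + K t1 t2 w (c1, c2))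
        * (haar k1 j1 eta (fst z) * haar l1 i1 zeta (snd z)))"
proof -
  have t0: "t1 > 0" "t2 > 0" using t dside_pos[of k1] dside_pos[of l1] by linarith+
  have h1: "integrable lborel (haar k1 j1 eta)" "integral\<^sup>L lborel (haar k1 j1 eta) = 0" "haar k1 j1 eta c1 \<noteq> 0"
    unfolding c1_def
    by (rule integrable_haar, rule integral_haar_eq_0[OF cancellative(1)], rule haar_nonzero[OF dcenter_in_dcube])
  have h2: "integrable lborel (haar l1 i1 zeta)" "integral\<^sup>L lborel (haar l1 i1 zeta) = 0" "haar l1 i1 zeta c2 \<noteq> 0"
    unfolding c2_def
    by (rule integrable_haar, rule integral_haar_eq_0[OF cancellative(2)], rule haar_nonzero[OF dcenter_in_dcube])
  show ?thesis
    unfolding theta_def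
    by (rule integral_tensor_double_difference[OF h1 h2 assumption1_uniform_bound[OF K t0 \<alpha>\<beta>] integrable])
qed

lemma theta_haar_tensor_le:
  fixes K :: "('n::finite, 'm::finite) kernel"
  assumes K: "assumption1 C \<alpha> \<beta> K" and \<alpha>\<beta>: "\<alpha> \<ge> 0" "\<beta> \<ge> 0"
    and t: "dside k1 < t1" "dside l1 < t2"
    and cancellative: "eta \<noteq> (\<lambda>_. False)" "zeta \<noteq> (\<lambda>_. False)"
  shows "\<bar>theta K t1 t2 (\<lambda>z. haar k1 j1 eta (fst z) * haar l1 i1 zeta (snd z)) (w1, w2)\<bar>
    \<le> C * (2 powr (real CARD('n) + \<alpha>) * dside k1 powr \<alpha> * sqrt (dside k1 ^ CARD('n))
             / (t1 + linf (w1 - dcenter k1 j1)) powr (real CARD('n) + \<alpha>))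
        * (2 powr (real CARD('m) + \<beta>) * dside l1 powr \<beta> * sqrt (dside l1 ^ CARD('m))
             / (t2 + linf (w2 - dcenter l1 i1)) powr (real CARD('m) + \<beta>))"
proof -
  define f where "f z = haar k1 j1 eta (fst z) * haar l1 i1 zeta (snd z)" for z
  define B1 where "B1 = 2 powr (real CARD('n) + \<alpha>) * dside k1 powr \<alpha> / (t1 + linf (w1 - dcenter k1 j1)) powr (real CARD('n) + \<alpha>)"
  define B2 where "B2 = 2 powr (real CARD('m) + \<beta>) * dside l1 powr \<beta> / (t2 + linf (w2 - dcenter l1 i1)) powr (real CARD('m) + \<beta>)"
  define S where "S = sqrt (dside k1 ^ CARD('n)) * sqrt (dside l1 ^ CARD('m))"
  have nonneg: "C * B1 * B2 \<ge> 0" "S \<ge> 0"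
    using assumption1_const_nonneg[OF K] dside_pos[of k1] dside_pos[of l1] by (auto simp: B1_def B2_def S_def)
  have "\<bar>theta K t1 t2 f (w1, w2)\<bar> \<le> C * B1 * B2 * S"
  proof (cases "integrable lborel (\<lambda>z. K t1 t2 (w1, w2) z * f z)")
    case False \<comment> \<open>the Bochner integral of a non-integrable function is \<open>0\<close>\<close>
    then show ?thesis using nonneg by (simp add: theta_def not_integrable_integral_eq)
  next
    case True
    have "\<bar>K t1 t2 (w1, w2) z - K t1 t2 (w1, w2) (fst z, dcenter l1 i1)
        - K t1 t2 (w1, w2) (dcenter k1 j1, snd z) + K t1 t2 (w1, w2) (dcenter k1 j1, dcenter l1 i1)\<bar>
      \<le> C * B1 * B2" if "f z \<noteq> 0" for z
    proof -
      have "fst z \<in> dcube k1 j1" "snd z \<in> dcube l1 i1"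
        using that by (auto simp: f_def intro: haar_nonzero_imp_mem)
      from double_difference_on_dcubes_le[OF K \<alpha>\<beta> t this, of w1 w2]
      show ?thesis unfolding B1_def B2_def by (cases z) (simp only: fst_conv snd_conv mult.assoc)
    qed
    moreover have "f \<in> borel_measurable lborel"
      unfolding f_def[abs_def] using borel_measurable_tensor[OF borel_measurable_haar borel_measurable_haar] by simp
    ultimately show ?thesis
      using True nonneg nn_integral_abs_haar_tensor_le[of k1 j1 eta l1 i1 zeta]
      unfolding f_def[abs_def] S_def
      by (subst theta_haar_tensor_eq_double_difference[OF K \<alpha>\<beta> t cancellative]) (auto intro!: abs_integral_mult_le)
  qed
  then show ?thesis
    by (simp add: f_def[abs_def] B1_def B2_def S_def field_simps)
qed

section \<open>The square function estimate\<close>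

lemma powr_minus_double: "(x::real) > 0 \<Longrightarrow> x powr (- (2 * e)) = 1 / (x powr e)\<^sup>2"
  using powr_power[of x e 2] by (simp add: powr_minus_divide)

lemma theta_haar_tensor_sq_le:
  fixes K :: "('n::finite, 'm::finite) kernel"
  assumes K: "assumption1 C \<alpha> \<beta> K" and \<alpha>\<beta>: "\<alpha> \<ge> 0" "\<beta> \<ge> 0"
    and t: "dside k1 < t1" "dside l1 < t2"
    and cancellative: "eta \<noteq> (\<lambda>_. False)" "zeta \<noteq> (\<lambda>_. False)"
  defines "A1 \<equiv> 2 powr (real CARD('n) + \<alpha>) * dside k1 powr \<alpha> * sqrt (dside k1 ^ CARD('n))"
    and "A2 \<equiv> 2 powr (real CARD('m) + \<beta>) * dside l1 powr \<beta> * sqrt (dside l1 ^ CARD('m))"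
  shows "\<bar>theta K t1 t2 (\<lambda>z. haar k1 j1 eta (fst z) * haar l1 i1 zeta (snd z)) (w1, w2)\<bar>\<^sup>2
    \<le> (C * A1 * A2)\<^sup>2 * ((t1 + linf (w1 - dcenter k1 j1)) powr (- (2 * (real CARD('n) + \<alpha>)))
        * (t2 + linf (w2 - dcenter l1 i1)) powr (- (2 * (real CARD('m) + \<beta>))))"
proof -
  define Y1 where "Y1 = t1 + linf (w1 - dcenter k1 j1)"
  define Y2 where "Y2 = t2 + linf (w2 - dcenter l1 i1)"
  have Y: "Y1 > 0" "Y2 > 0"
    unfolding Y1_def Y2_def using t dside_pos[of k1] dside_pos[of l1] linf_nonneg
    by (meson add_pos_nonneg order_less_trans)+
  have "\<bar>theta K t1 t2 (\<lambda>z. haar k1 j1 eta (fst z) * haar l1 i1 zeta (snd z)) (w1, w2)\<bar>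
      \<le> C * A1 * A2 / (Y1 powr (real CARD('n) + \<alpha>) * Y2 powr (real CARD('m) + \<beta>))"
    using theta_haar_tensor_le[OF K \<alpha>\<beta> t cancellative, of j1 i1 w1 w2]
    unfolding A1_def A2_def Y1_def Y2_def by simp
  then have "\<bar>theta K t1 t2 (\<lambda>z. haar k1 j1 eta (fst z) * haar l1 i1 zeta (snd z)) (w1, w2)\<bar>\<^sup>2
      \<le> (C * A1 * A2 / (Y1 powr (real CARD('n) + \<alpha>) * Y2 powr (real CARD('m) + \<beta>)))\<^sup>2"
    by (rule power_mono) simp
  also have "\<dots> = (C * A1 * A2)\<^sup>2 * (Y1 powr (- (2 * (real CARD('n) + \<alpha>))) * Y2 powr (- (2 * (real CARD('m) + \<beta>))))"
    unfolding powr_minus_double[OF Y(1)] powr_minus_double[OF Y(2)] by (simp add: power_divide power_mult_distrib)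
  finally show ?thesis unfolding Y1_def Y2_def .
qed

lemma lhs_integrand_haar_tensor_le:
  fixes K :: "('n::finite, 'm::finite) kernel" and x1 y1 :: "real^'n" and x2 y2 :: "real^'m"
    and j1 :: "'n \<Rightarrow> int" and i1 :: "'m \<Rightarrow> int" and q1 q2 :: real
  assumes K: "assumption1 C \<alpha> \<beta> K" and \<alpha>\<beta>: "\<alpha> \<ge> 0" "\<beta> \<ge> 0"
    and t: "dside k1 < t1" "dside l1 < t2"
    and cancellative: "eta \<noteq> (\<lambda>_. False)" "zeta \<noteq> (\<lambda>_. False)"
  defines "A1 \<equiv> 2 powr (real CARD('n) + \<alpha>) * dside k1 powr \<alpha> * sqrt (dside k1 ^ CARD('n))"
    and "A2 \<equiv> 2 powr (real CARD('m) + \<beta>) * dside l1 powr \<beta> * sqrt (dside l1 ^ CARD('m))"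
    and "X1 \<equiv> (t1 + linf (x1 - y1 - dcenter k1 j1)) powr (- (2 * (real CARD('n) + \<alpha>)))
          * (t1 / (t1 + linf y1)) powr q1 / t1 ^ CARD('n)"
    and "X2 \<equiv> (t2 + linf (x2 - y2 - dcenter l1 i1)) powr (- (2 * (real CARD('m) + \<beta>)))
          * (t2 / (t2 + linf y2)) powr q2 / t2 ^ CARD('m)"
  shows "ennreal (\<bar>theta K t1 t2 (\<lambda>z. haar k1 j1 eta (fst z) * haar l1 i1 zeta (snd z)) (x1 - y1, x2 - y2)\<bar>\<^sup>2
        * (t1 / (t1 + linf y1)) powr q1 * (t2 / (t2 + linf y2)) powr q2 / (t1 ^ CARD('n) * t2 ^ CARD('m)))
    \<le> ennreal (C\<^sup>2) * ((ennreal (A1\<^sup>2) * ennreal X1) * (ennreal (A2\<^sup>2) * ennreal X2))"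
proof -
  have t0: "t1 > 0" "t2 > 0" using t dside_pos[of k1] dside_pos[of l1] by linarith+
  have X: "X1 \<ge> 0" "X2 \<ge> 0" unfolding X1_def X2_def using t0 by simp_all
  have "\<bar>theta K t1 t2 (\<lambda>z. haar k1 j1 eta (fst z) * haar l1 i1 zeta (snd z)) (x1 - y1, x2 - y2)\<bar>\<^sup>2
        * (t1 / (t1 + linf y1)) powr q1 * (t2 / (t2 + linf y2)) powr q2 / (t1 ^ CARD('n) * t2 ^ CARD('m))
      \<le> (C * A1 * A2)\<^sup>2 * ((t1 + linf (x1 - y1 - dcenter k1 j1)) powr (- (2 * (real CARD('n) + \<alpha>)))
        * (t2 + linf (x2 - y2 - dcenter l1 i1)) powr (- (2 * (real CARD('m) + \<beta>))))
        * (t1 / (t1 + linf y1)) powr q1 * (t2 / (t2 + linf y2)) powr q2 / (t1 ^ CARD('n) * t2 ^ CARD('m))"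
      (is "?L \<le> _")
    using theta_haar_tensor_sq_le[OF K \<alpha>\<beta> t cancellative] t0 unfolding A1_def A2_def
    by (intro divide_right_mono mult_right_mono) auto
  also have "\<dots> = C\<^sup>2 * ((A1\<^sup>2 * X1) * (A2\<^sup>2 * X2))"
    unfolding X1_def X2_def by (simp add: power_mult_distrib field_simps)
  finally have "ennreal ?L \<le> ennreal (C\<^sup>2 * ((A1\<^sup>2 * X1) * (A2\<^sup>2 * X2)))"
    by (rule ennreal_leI)
  also have "\<dots> = ennreal (C\<^sup>2) * ((ennreal (A1\<^sup>2) * ennreal X1) * (ennreal (A2\<^sup>2) * ennreal X2))"
    using X by (simp add: ennreal_mult)
  finally show ?thesis .
qed

lemma nn_integral_decay_from_dcube_le:
  fixes x :: "real^'n::finite" and k1 :: int and j1 :: "'n \<Rightarrow> int"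
  assumes x: "x \<in> dcube k2 j2" and t: "dside k2 / 2 < t" and p: "p > real CARD('n)" and q: "q \<ge> p"
  defines "D \<equiv> dside k2 + cdist (dcube k1 j1) (dcube k2 j2)"
  shows "(\<integral>\<^sup>+ y. ennreal ((t + linf (x - y - dcenter k1 j1)) powr (-p) * (t/(t+linf y)) powr q / t^CARD('n)) \<partial>lborel)
     \<le> ennreal (4 powr p * (decay_const CARD('n) q + decay_const CARD('n) p) * D powr (-p))"
proof -
  let ?E = "decay_const CARD('n) q + decay_const CARD('n) p"
  define u where "u = x - dcenter k1 j1"
  have t0: "t > 0" using t dside_pos[of k2] by linarith
  have p0: "p > 0" using p by (metis of_nat_0_le_iff order_le_less_trans)
  have E: "?E > 0" using decay_const_pos[of "CARD('n)" q] decay_const_pos[of "CARD('n)" p] p q by simp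
  have d: "0 \<le> cdist (dcube k1 j1) (dcube k2 j2)" "cdist (dcube k1 j1) (dcube k2 j2) \<le> linf u"
    unfolding u_def by (rule cdist_nonneg[OF dcenter_in_dcube x], rule cdist_le_linf[OF dcenter_in_dcube x])
  have "(t + linf u) powr (-p) \<le> (D/2) powr (-p)"
    using d t t0 p0 dside_pos[of k2] unfolding D_def by (intro powr_mono2') auto
  also have "\<dots> = D powr (-p) / 2 powr (-p)" by (rule powr_divide)
  also have "\<dots> = 2 powr p * D powr (-p)" by (simp add: powr_minus divide_inverse mult.commute)
  finally have side: "(t + linf u) powr (-p) \<le> 2 powr p * D powr (-p)" .
  have shift: "x - y - dcenter k1 j1 = u - y" for y by (simp add: u_def algebra_simps)
  have "(\<integral>\<^sup>+ y. ennreal ((t + linf (x - y - dcenter k1 j1)) powr (-p) * (t/(t+linf y)) powr q / t^CARD('n)) \<partial>lborel)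
      \<le> ennreal (2 powr p * ?E * (t + linf u) powr (-p))"
    unfolding shift by (rule nn_integral_decay_convolution_le[OF t0 p q])
  also have "\<dots> \<le> ennreal (2 powr p * ?E * (2 powr p * D powr (-p)))"
    using side E by (intro ennreal_leI mult_left_mono) auto
  also have "2 powr p * ?E * (2 powr p * D powr (-p)) = 4 powr p * ?E * D powr (-p)"
    using powr_mult[of 2 2 p] by simp
  finally show ?thesis .
qed

text \<open>With \<open>p = 2 (N + a)\<close>: \<open>2^p\<close> comes from squaring the bound on \<open>theta\<close> and \<open>4^p\<close>
  from the convolution estimate together with \<open>t1 > l(I2)/2\<close>.\<close>

definition factor_const :: "nat \<Rightarrow> real \<Rightarrow> real \<Rightarrow> real" where
  "factor_const N a q = 8 powr (2 * (real N + a)) * (decay_const N q + decay_const N (2 * (real N + a)))"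

lemma factor_const_nonneg: "a \<ge> 0 \<Longrightarrow> q \<ge> 2 * (real N + a) \<Longrightarrow> N > 0 \<Longrightarrow> factor_const N a q \<ge> 0"
  unfolding factor_const_def
  using decay_const_pos[of N q] decay_const_pos[of N "2 * (real N + a)"] by simp

lemma factor_const_eq:
  fixes D l v e E :: real
  assumes D: "D > 0" and v: "v \<ge> 0"
  shows "(2 powr e * l * sqrt v)\<^sup>2 * (4 powr (2 * e) * E * D powr (- (2 * e)))
       = 8 powr (2 * e) * E * (l * sqrt v / D powr e)\<^sup>2"
proof -
  have square: "(x powr e)\<^sup>2 = x powr (2 * e)" if "x > 0" for x :: real
    using powr_power[of x e 2] that by simp
  have eight: "8 powr (2 * e) = 2 powr (2 * e) * 4 powr (2 * e)"
    using powr_mult[of 2 4 "2 * e"] by simp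
  have "D powr (- (2 * e)) = 1 / (D powr e)\<^sup>2"
    using D by (simp add: powr_minus_divide square)
  then show ?thesis
    using D unfolding eight power_mult_distrib power_divide real_sqrt_pow2[OF v] by (simp add: square)
qed

lemma nn_integral_haar_factor_le:
  fixes x :: "real^'n::finite" and k :: int and j :: "'n \<Rightarrow> int"
  assumes x: "x \<in> dcube k2 j2" and t: "dside k2 / 2 < t" and a: "0 \<le> a" and q: "2 * (real CARD('n) + a) \<le> q"
  defines "A \<equiv> 2 powr (real CARD('n) + a) * dside k powr a * sqrt (dside k ^ CARD('n))"
    and "D \<equiv> dside k2 + cdist (dcube k j) (dcube k2 j2)"
  shows "(\<integral>\<^sup>+ y. ennreal (A\<^sup>2) * ennreal ((t + linf (x - y - dcenter k j)) powr (- (2 * (real CARD('n) + a)))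
          * (t / (t + linf y)) powr q / t ^ CARD('n)) \<partial>lborel)
    \<le> ennreal (factor_const CARD('n) a q * (dside k powr a * sqrt (dside k ^ CARD('n)) / D powr (real CARD('n) + a))\<^sup>2)"
proof -
  let ?N = "CARD('n)"
  let ?p = "2 * (real ?N + a)"
  let ?E = "decay_const ?N q + decay_const ?N ?p"
  have p: "?p > real ?N" using a by (simp add: add_pos_nonneg)
  have E: "?E > 0" using decay_const_pos p q by (auto intro: add_pos_pos)
  have D: "D > 0"
    unfolding D_def using cdist_nonneg[OF dcenter_in_dcube[of k j] x] dside_pos[of k2] by linarith
  have "(\<integral>\<^sup>+ y. ennreal (A\<^sup>2) * ennreal ((t + linf (x - y - dcenter k j)) powr (- ?p)
          * (t / (t + linf y)) powr q / t ^ ?N) \<partial>lborel)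
      = ennreal (A\<^sup>2) * (\<integral>\<^sup>+ y. ennreal ((t + linf (x - y - dcenter k j)) powr (- ?p)
          * (t / (t + linf y)) powr q / t ^ ?N) \<partial>lborel)"
    by (rule nn_integral_cmult) measurable
  also have "\<dots> \<le> ennreal (A\<^sup>2) * ennreal (4 powr ?p * ?E * D powr (- ?p))"
    unfolding D_def using p q by (intro mult_left_mono nn_integral_decay_from_dcube_le[OF x t]) auto
  also have "\<dots> = ennreal (A\<^sup>2 * (4 powr ?p * ?E * D powr (- ?p)))"
    using E by (simp add: ennreal_mult)
  also have "A\<^sup>2 * (4 powr ?p * ?E * D powr (- ?p))
      = factor_const ?N a q * (dside k powr a * sqrt (dside k ^ ?N) / D powr (real ?N + a))\<^sup>2"
    unfolding A_def factor_const_def by (rule factor_const_eq[OF D]) (use dside_pos[of k] in simp)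
  finally show ?thesis .
qed

lemma lhs_sq_haar_tensor_le:
  fixes K :: "('n::finite, 'm::finite) kernel"
  assumes K: "assumption1 C \<alpha> \<beta> K"
    and \<alpha>: "0 \<le> \<alpha>" "\<alpha> \<le> real CARD('n) * (lam1 - 2) / 2"
    and \<beta>: "0 \<le> \<beta>" "\<beta> \<le> real CARD('m) * (lam2 - 2) / 2"
    and scales: "dside k1 < dside k2" "dside l1 < dside l2"
    and cancellative: "eta \<noteq> (\<lambda>_. False)" "zeta \<noteq> (\<lambda>_. False)"
    and x1: "x1 \<in> dcube k2 j2" "dside k2 / 2 < t1"
    and x2: "x2 \<in> dcube l2 i2" "dside l2 / 2 < t2"
  shows "lhs_sq K lam1 lam2 (\<lambda>z. haar k1 j1 eta (fst z) * haar l1 i1 zeta (snd z)) x1 x2 t1 t2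
    \<le> ennreal (C\<^sup>2 * factor_const CARD('n) \<alpha> (real CARD('n) * lam1) * factor_const CARD('m) \<beta> (real CARD('m) * lam2)
       * ((dside k1 powr \<alpha> * sqrt (dside k1 ^ CARD('n))
             / (dside k2 + cdist (dcube k1 j1) (dcube k2 j2)) powr (real CARD('n) + \<alpha>))
        * (dside l1 powr \<beta> * sqrt (dside l1 ^ CARD('m))
             / (dside l2 + cdist (dcube l1 i1) (dcube l2 i2)) powr (real CARD('m) + \<beta>)))\<^sup>2)"
proof -
  let ?N = "CARD('n)" and ?M = "CARD('m)"
  define a where "a y = ennreal ((2 powr (real ?N + \<alpha>) * dside k1 powr \<alpha> * sqrt (dside k1 ^ ?N))\<^sup>2)
    * ennreal ((t1 + linf (x1 - y - dcenter k1 j1)) powr (- (2 * (real ?N + \<alpha>)))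
        * (t1 / (t1 + linf y)) powr (real ?N * lam1) / t1 ^ ?N)" for y
  define b where "b y = ennreal ((2 powr (real ?M + \<beta>) * dside l1 powr \<beta> * sqrt (dside l1 ^ ?M))\<^sup>2)
    * ennreal ((t2 + linf (x2 - y - dcenter l1 i1)) powr (- (2 * (real ?M + \<beta>)))
        * (t2 / (t2 + linf y)) powr (real ?M * lam2) / t2 ^ ?M)" for y
  have t: "dside k1 < t1" "dside l1 < t2"
    using dside_le_half[OF scales(1)] dside_le_half[OF scales(2)] x1(2) x2(2) by linarith+
  have q: "2 * (real ?N + \<alpha>) \<le> real ?N * lam1" "2 * (real ?M + \<beta>) \<le> real ?M * lam2"
    using \<alpha>(2) \<beta>(2) by (simp_all add: field_simps)
  have "lhs_sq K lam1 lam2 (\<lambda>z. haar k1 j1 eta (fst z) * haar l1 i1 zeta (snd z)) x1 x2 t1 t2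
      \<le> (\<integral>\<^sup>+ y. ennreal (C\<^sup>2) * (a (fst y) * b (snd y)) \<partial>lborel)"
    unfolding lhs_sq_def a_def b_def
    by (intro nn_integral_mono lhs_integrand_haar_tensor_le[OF K \<alpha>(1) \<beta>(1) t cancellative])
  also have "\<dots> = ennreal (C\<^sup>2) * ((\<integral>\<^sup>+ y. a y \<partial>lborel) * (\<integral>\<^sup>+ y. b y \<partial>lborel))"
    unfolding a_def b_def by (intro nn_integral_lborel_tensor_cmult) measurable
  also have "\<dots> \<le> ennreal (C\<^sup>2) * (ennreal (factor_const ?N \<alpha> (real ?N * lam1)
          * (dside k1 powr \<alpha> * sqrt (dside k1 ^ ?N) / (dside k2 + cdist (dcube k1 j1) (dcube k2 j2)) powr (real ?N + \<alpha>))\<^sup>2)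
        * ennreal (factor_const ?M \<beta> (real ?M * lam2)
          * (dside l1 powr \<beta> * sqrt (dside l1 ^ ?M) / (dside l2 + cdist (dcube l1 i1) (dcube l2 i2)) powr (real ?M + \<beta>))\<^sup>2))"
    unfolding a_def b_def
    using nn_integral_haar_factor_le[OF x1 \<alpha>(1) q(1), where k=k1 and j=j1]
      nn_integral_haar_factor_le[OF x2 \<beta>(1) q(2), where k=l1 and j=i1]
    by (intro mult_left_mono mult_mono) auto
  also have "\<dots> = ennreal (C\<^sup>2 * factor_const ?N \<alpha> (real ?N * lam1) * factor_const ?M \<beta> (real ?M * lam2)
       * ((dside k1 powr \<alpha> * sqrt (dside k1 ^ ?N) / (dside k2 + cdist (dcube k1 j1) (dcube k2 j2)) powr (real ?N + \<alpha>))
        * (dside l1 powr \<beta> * sqrt (dside l1 ^ ?M) / (dside l2 + cdist (dcube l1 i1) (dcube l2 i2)) powr (real ?M + \<beta>)))\<^sup>2)"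
    using factor_const_nonneg[OF \<alpha>(1) q(1)] factor_const_nonneg[OF \<beta>(1) q(2)]
    by (simp add: ennreal_mult[symmetric] power_mult_distrib power_divide mult_ac)
  finally show ?thesis .
qed

lemma dcube_decay_le_A_coefficient:
  fixes j1 j2 :: "'n::finite \<Rightarrow> int"
  assumes "dside k1 < dside k2" and "a \<ge> 0"
  defines "e \<equiv> real CARD('n) + a" and "d \<equiv> cdist (dcube k1 j1) (dcube k2 j2)"
  shows "dside k1 powr a * sqrt (dside k1 ^ CARD('n)) / (dside k2 + d) powr e
    \<le> 2 powr e * (dside k1 powr (a/2) * dside k2 powr (a/2) / (dside k1 + dside k2 + d) powr e
        * sqrt (dside k1 ^ CARD('n)) * sqrt (dside k2 ^ CARD('n)) / sqrt (dside k2 ^ CARD('n)))"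
proof -
  have l: "0 < dside k1" "dside k1 \<le> dside k2" using assms(1) dside_pos[of k1] by auto
  have d: "0 \<le> d" unfolding d_def by (rule cdist_nonneg[OF dcenter_in_dcube dcenter_in_dcube])
  have e: "e \<ge> 0" unfolding e_def using assms(2) by simp
  have "dside k1 powr a = dside k1 powr (a/2) * dside k1 powr (a/2)" by (simp add: powr_add[symmetric])
  also have "\<dots> \<le> dside k1 powr (a/2) * dside k2 powr (a/2)"
    using l assms(2) by (intro mult_left_mono powr_mono2) auto
  finally have num: "dside k1 powr a \<le> dside k1 powr (a/2) * dside k2 powr (a/2)" .
  have "(dside k1 + dside k2 + d) powr e \<le> (2 * (dside k2 + d)) powr e"
    using l d e by (intro powr_mono2) auto
  also have "\<dots> = 2 powr e * (dside k2 + d) powr e" by (rule powr_mult)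
  finally have den: "(dside k1 + dside k2 + d) powr e \<le> 2 powr e * (dside k2 + d) powr e" .
  have "dside k1 powr a * sqrt (dside k1 ^ CARD('n)) / (dside k2 + d) powr e
      \<le> dside k1 powr (a/2) * dside k2 powr (a/2) * sqrt (dside k1 ^ CARD('n)) / ((dside k1 + dside k2 + d) powr e / 2 powr e)"
    using num den l d by (intro frac_le mult_right_mono) (auto simp: field_simps)
  then show ?thesis
    using dside_pos[of k2] by (simp add: field_simps)
qed

lemma ennreal_le_scaled_squares:
  fixes c G r s :: real
  assumes "x \<le> ennreal (c\<^sup>2 * r\<^sup>2)" and "0 \<le> r" "r \<le> G * s" "1 \<le> G"
  shows "x \<le> ennreal ((c * G * r)\<^sup>2) \<and> x \<le> ennreal ((c * G * s)\<^sup>2)"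
proof -
  have "r \<le> G * r" using mult_right_mono[OF assms(4,2)] by simp
  moreover have "r \<le> G * \<bar>s\<bar>" using assms(3,4) by (smt (verit) abs_ge_self mult_left_mono)
  ultimately have "\<bar>c * r\<bar> \<le> \<bar>c * G * r\<bar>" "\<bar>c * r\<bar> \<le> \<bar>c * G * s\<bar>"
    using assms(2,4) by (auto simp: abs_mult mult.assoc intro!: mult_left_mono)
  then have "c\<^sup>2 * r\<^sup>2 \<le> (c * G * r)\<^sup>2" "c\<^sup>2 * r\<^sup>2 \<le> (c * G * s)\<^sup>2"
    by (simp_all add: abs_le_square_iff power_mult_distrib)
  then show ?thesis using assms(1) by (auto intro: order_trans ennreal_leI)
qed

lemma lhs_sq_haar_tensor_le_A_coefficients:
  fixes K :: "('n::finite, 'm::finite) kernel" and j1 :: "'n \<Rightarrow> int" and i1 :: "'m \<Rightarrow> int"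
  assumes K: "assumption1 C \<alpha> \<beta> K"
    and \<alpha>: "0 \<le> \<alpha>" "\<alpha> \<le> real CARD('n) * (lam1 - 2) / 2"
    and \<beta>: "0 \<le> \<beta>" "\<beta> \<le> real CARD('m) * (lam2 - 2) / 2"
    and scales: "dside k1 < dside k2" "dside l1 < dside l2"
    and cancellative: "eta \<noteq> (\<lambda>_. False)" "zeta \<noteq> (\<lambda>_. False)"
    and x1: "x1 \<in> dcube k2 j2" "dside k2 / 2 < t1"
    and x2: "x2 \<in> dcube l2 i2" "dside l2 / 2 < t2"
  defines "F \<equiv> factor_const CARD('n) \<alpha> (real CARD('n) * lam1) * factor_const CARD('m) \<beta> (real CARD('m) * lam2)"
    and "G \<equiv> 2 powr (real CARD('n) + \<alpha>) * 2 powr (real CARD('m) + \<beta>)"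
    and "a1 \<equiv> dside k1 powr \<alpha> * sqrt (dside k1 ^ CARD('n))
          / (dside k2 + cdist (dcube k1 j1) (dcube k2 j2)) powr (real CARD('n) + \<alpha>)"
    and "a2 \<equiv> dside l1 powr \<beta> * sqrt (dside l1 ^ CARD('m))
          / (dside l2 + cdist (dcube l1 i1) (dcube l2 i2)) powr (real CARD('m) + \<beta>)"
    and "A1 \<equiv> dside k1 powr (\<alpha>/2) * dside k2 powr (\<alpha>/2)
          / (dside k1 + dside k2 + cdist (dcube k1 j1) (dcube k2 j2)) powr (real CARD('n) + \<alpha>)
          * sqrt (dside k1 ^ CARD('n)) * sqrt (dside k2 ^ CARD('n)) / sqrt (dside k2 ^ CARD('n))"
    and "A2 \<equiv> dside l1 powr (\<beta>/2) * dside l2 powr (\<beta>/2)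
          / (dside l1 + dside l2 + cdist (dcube l1 i1) (dcube l2 i2)) powr (real CARD('m) + \<beta>)
          * sqrt (dside l1 ^ CARD('m)) * sqrt (dside l2 ^ CARD('m)) / sqrt (dside l2 ^ CARD('m))"
  shows "lhs_sq K lam1 lam2 (\<lambda>z. haar k1 j1 eta (fst z) * haar l1 i1 zeta (snd z)) x1 x2 t1 t2
        \<le> ennreal ((C * sqrt F * G * (a1 * a2))\<^sup>2)
      \<and> lhs_sq K lam1 lam2 (\<lambda>z. haar k1 j1 eta (fst z) * haar l1 i1 zeta (snd z)) x1 x2 t1 t2
        \<le> ennreal ((C * sqrt F * G * (A1 * A2))\<^sup>2)"
proof (rule ennreal_le_scaled_squares)
  have "2 * (real CARD('n) + \<alpha>) \<le> real CARD('n) * lam1" "2 * (real CARD('m) + \<beta>) \<le> real CARD('m) * lam2"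
    using \<alpha>(2) \<beta>(2) by (simp_all add: field_simps)
  then have "F \<ge> 0"
    unfolding F_def using \<alpha>(1) \<beta>(1) by (intro mult_nonneg_nonneg factor_const_nonneg) auto
  then show "lhs_sq K lam1 lam2 (\<lambda>z. haar k1 j1 eta (fst z) * haar l1 i1 zeta (snd z)) x1 x2 t1 t2
      \<le> ennreal ((C * sqrt F)\<^sup>2 * (a1 * a2)\<^sup>2)"
    using lhs_sq_haar_tensor_le[OF K \<alpha> \<beta> scales cancellative x1 x2, of j1 i1]
    by (simp add: F_def a1_def a2_def power_mult_distrib mult.assoc)
  show "0 \<le> a1 * a2" unfolding a1_def a2_def using dside_pos[of k1] dside_pos[of l1] by simp
  have "a1 * a2 \<le> (2 powr (real CARD('n) + \<alpha>) * A1) * (2 powr (real CARD('m) + \<beta>) * A2)"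
    unfolding a1_def a2_def A1_def A2_def
    using \<alpha>(1) \<beta>(1) dside_pos[of k1] dside_pos[of k2] dside_pos[of l1] dside_pos[of l2]
    by (intro mult_mono dcube_decay_le_A_coefficient scales) auto
  then show "a1 * a2 \<le> G * (A1 * A2)" by (simp only: G_def mult_ac)
  have "1 \<le> 2 powr (real CARD('n) + \<alpha>)" "1 \<le> 2 powr (real CARD('m) + \<beta>)"
    using \<alpha>(1) \<beta>(1) by (auto intro: ge_one_powr_ge_zero)
  then show "1 \<le> G" unfolding G_def using mult_mono by fastforce
qed

theorem mainTheorem3:
  fixes lam1 lam2 \<alpha> \<beta> C :: real
  assumes "lam1 > 2" and "lam2 > 2"
    and "0 < \<alpha>" and "\<alpha> \<le> real CARD('n::finite) * (lam1 - 2) / 2"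
    and "0 < \<beta>" and "\<beta> \<le> real CARD('m::finite) * (lam2 - 2) / 2"
  shows "\<exists>C'. \<forall>(K :: ('n, 'm) kernel). assumption1 C \<alpha> \<beta> K \<longrightarrow>
    (\<forall>k1 k2 (j1 :: 'n \<Rightarrow> int) j2 (eta :: 'n \<Rightarrow> bool)
       l1 l2 (i1 :: 'm \<Rightarrow> int) i2 (zeta :: 'm \<Rightarrow> bool) x1 x2 t1 t2.
      dside k1 < dside k2 \<longrightarrow> dside l1 < dside l2 \<longrightarrow>
      eta \<noteq> (\<lambda>_. False) \<longrightarrow> zeta \<noteq> (\<lambda>_. False) \<longrightarrow>
      x1 \<in> dcube k2 j2 \<longrightarrow> dside k2 / 2 < t1 \<longrightarrow> t1 < dside k2 \<longrightarrow>
      x2 \<in> dcube l2 i2 \<longrightarrow> dside l2 / 2 < t2 \<longrightarrow> t2 < dside l2 \<longrightarrow>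
      (let f = (\<lambda>z. haar k1 j1 eta (fst z) * haar l1 i1 zeta (snd z));
           Q = lhs_sq K lam1 lam2 f x1 x2 t1 t2;
           I1 = dcube k1 j1; I2 = dcube k2 j2; J1 = dcube l1 i1; J2 = dcube l2 i2;
           n = real CARD('n); m = real CARD('m);
           lI1 = dside k1; lI2 = dside k2; lJ1 = dside l1; lJ2 = dside l2;
           vI1 = lI1 ^ CARD('n); vI2 = lI2 ^ CARD('n);
           vJ1 = lJ1 ^ CARD('m); vJ2 = lJ2 ^ CARD('m);
           DI = lI1 + lI2 + cdist I1 I2; DJ = lJ1 + lJ2 + cdist J1 J2;
           AI = lI1 powr (\<alpha>/2) * lI2 powr (\<alpha>/2) / DI powr (n + \<alpha>) * sqrt vI1 * sqrt vI2;
           AJ = lJ1 powr (\<beta>/2) * lJ2 powr (\<beta>/2) / DJ powr (m + \<beta>) * sqrt vJ1 * sqrt vJ2;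
           R1 = (lI1 powr \<alpha> * sqrt vI1 / (lI2 + cdist I1 I2) powr (n + \<alpha>))
              * (lJ1 powr \<beta> * sqrt vJ1 / (lJ2 + cdist J1 J2) powr (m + \<beta>));
           R2 = AI / sqrt vI2 * (AJ / sqrt vJ2)
       in Q \<le> ennreal ((C' * R1)\<^sup>2) \<and> Q \<le> ennreal ((C' * R2)\<^sup>2)))"
  by (intro exI[of _ "C * sqrt (factor_const CARD('n) \<alpha> (real CARD('n) * lam1) * factor_const CARD('m) \<beta> (real CARD('m) * lam2))
      * (2 powr (real CARD('n) + \<alpha>) * 2 powr (real CARD('m) + \<beta>))"] allI impI,
      unfold Let_def, rule lhs_sq_haar_tensor_le_A_coefficients) (use assms in auto)

end
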